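(* Let $I$ be an index set, $S,T\in GL(2,\mathbb R)$, and for $r\in I$ let $P_r=S\,\mathrm{diag}\{p_{1r},p_{2r}\}S^{-1}$, $Q_r=T\,\mathrm{diag}\{q_{1r},q_{2r}\}T^{-1}$ with all $p_{kr},q_{kr}$ nonzero reals. There exists a diffeomorphism (equivalently, a real-analytic diffeomorphism) $f\colon\overline{\mathbb R}\to\overline{\mathbb R}$ with $f(P_r(x))=Q_r(f(x))$ for all $x\in\overline{\mathbb R}$, $r\in I$, if and only if there exists $\varepsilon\in\{1,-1\}$ with $\dfrac{q_{1r}}{q_{2r}}=\Bigl(\dfrac{p_{1r}}{p_{2r}}\Bigr)^{\varepsilon}$ for all $r\in I$.
   Context: $\overline{\mathbb R}=\mathbb R\cup\{\infty\}$ with its standard smooth structure as the real projective line. A matrix $\begin{pmatrix}a&b\\c&d\end{pmatrix}\in GL(2,\mathbb R)$ acts on $\overline{\mathbb R}$ by $x\mapsto\frac{ax+b}{cx+d}$. *)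

theory Defs
  imports "HOL-Analysis.Analysis"
begin

datatype rp1 = Fin real | Infty

text \<open>Standard smooth atlas of the projective line: rp1_chart False is x, defined away
  from infinity; rp1_chart True is 1/x (infinity sent to 0), defined away from 0.\<close>
fun rp1_cdom :: "bool \<Rightarrow> rp1 set" where
  "rp1_cdom False = range Fin"
| "rp1_cdom True = - {Fin 0}"

fun rp1_chart :: "bool \<Rightarrow> rp1 \<Rightarrow> real" where
  "rp1_chart False (Fin x) = x"
| "rp1_chart False Infty = 0"
| "rp1_chart True (Fin x) = 1 / x"
| "rp1_chart True Infty = 0"

fun rp1_chart_inv :: "bool \<Rightarrow> real \<Rightarrow> rp1" where
  "rp1_chart_inv False t = Fin t"
| "rp1_chart_inv True t = (if t = 0 then Infty else Fin (1 / t))"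

definition smooth_on :: "real set \<Rightarrow> (real \<Rightarrow> real) \<Rightarrow> bool" where
  "smooth_on V h \<longleftrightarrow>
     (\<exists>D. D 0 = h \<and> (\<forall>n. \<forall>t\<in>V. (D n has_real_derivative D (Suc n) t) (at t)))"

definition smooth_map :: "(rp1 \<Rightarrow> rp1) \<Rightarrow> bool" where
  "smooth_map g \<longleftrightarrow>
     (\<forall>p. \<exists>i j V. open V \<and> p \<in> rp1_cdom i \<and> rp1_chart i p \<in> V \<and>
        (\<forall>t\<in>V. g (rp1_chart_inv i t) \<in> rp1_cdom j) \<and>
        smooth_on V (\<lambda>t. rp1_chart j (g (rp1_chart_inv i t))))"

definition diffeo :: "(rp1 \<Rightarrow> rp1) \<Rightarrow> bool" where
  "diffeo g \<longleftrightarrow> bij g \<and> smooth_map g \<and> smooth_map (inv g)"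

fun mob :: "real^2^2 \<Rightarrow> rp1 \<Rightarrow> rp1" where
  "mob A (Fin x) =
     (if A$2$1 * x + A$2$2 = 0 then Infty
      else Fin ((A$1$1 * x + A$1$2) / (A$2$1 * x + A$2$2)))"
| "mob A Infty = (if A$2$1 = 0 then Infty else Fin (A$1$1 / A$2$1))"

definition diag2 :: "real \<Rightarrow> real \<Rightarrow> real^2^2" where
  "diag2 a b = (\<chi> i j. if i = j then (if i = 1 then a else b) else 0)"

end

theory Submission
  imports Defs
begin

text \<open>
  The projective line is treated in homogeneous coordinates: mob A acts on the line of a
  vector v by the linear map A, and in the two standard charts every Moebius map is a linear
  fractional function. This gives smoothness of Moebius maps and an explicit chart derivative.

  Necessity: if v is an eigenvector of A with eigenvalue k, the fixed point [v] of mob A has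
  multiplier det A / k^2, and a diffeomorphism conjugating mob P to mob Q preserves multipliers of
  corresponding fixed points (chain rule; its own derivative is nonzero). The point [S e2] is fixed
  by every P_r with multiplier p1/p2; its image b is fixed by every Q_r, hence is [T e2] (multiplier
  q1/q2) or some other eigenline (multiplier q2/q1), and the alternative depends only on b.

  Sufficiency: the ratio condition makes diag(p1, p2) and diag(q1, q2) proportional after
  conjugating by the identity or the swap K, so the Moebius map of T K S^-1 is the conjugacy.
\<close>

subsection \<open>Homogeneous coordinates and the Moebius action\<close>

definition proj :: "real^2 \<Rightarrow> rp1" where
  "proj v = (if v$2 = 0 then Infty else Fin (v$1 / v$2))"

lemma matrix_vector_mult_2:
  fixes A :: "real^2^2"
  shows "(A *v v)$1 = A$1$1 * v$1 + A$1$2 * v$2" "(A *v v)$2 = A$2$1 * v$1 + A$2$2 * v$2"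
  by (simp_all add: matrix_vector_mult_def sum_2)

lemma vec2_eq_iff: "(v::real^2) = w \<longleftrightarrow> v$1 = w$1 \<and> v$2 = w$2"
  by (simp add: vec_eq_iff forall_2)

lemma proj_surj: "\<exists>v. v \<noteq> 0 \<and> p = proj v"
proof (cases p)
  case (Fin x)
  then show ?thesis by (intro exI[of _ "vector [x, 1]"]) (simp add: proj_def vec2_eq_iff)
next
  case Infty
  then show ?thesis by (intro exI[of _ "vector [1, 0]"]) (simp add: proj_def vec2_eq_iff)
qed

lemma proj_scaleR: "c \<noteq> 0 \<Longrightarrow> proj (c *\<^sub>R v) = proj v"
  by (simp add: proj_def)

lemma proj_eq_imp_parallel:
  assumes "u \<noteq> 0" "v \<noteq> 0" "proj u = proj v"
  shows "\<exists>c. c \<noteq> 0 \<and> u = c *\<^sub>R v"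
proof (cases "v$2 = 0")
  case True
  then have "u$2 = 0" "u$1 \<noteq> 0" "v$1 \<noteq> 0"
    using assms by (auto simp: proj_def vec2_eq_iff split: if_splits)
  then show ?thesis using True
    by (intro exI[of _ "u$1 / v$1"]) (simp add: vec2_eq_iff)
next
  case False
  then have "u$2 \<noteq> 0" "u$1 / u$2 = v$1 / v$2"
    using assms by (auto simp: proj_def split: if_splits)
  then show ?thesis using False
    by (intro exI[of _ "u$2 / v$2"]) (simp add: vec2_eq_iff field_simps)
qed

text \<open>The Moebius action of a matrix is the projectivisation of its linear action; this is
  what reduces all statements about the action to linear algebra.\<close>

lemma mob_proj: assumes "v \<noteq> 0" shows "mob A (proj v) = proj (A *v v)"
proof (cases "v$2 = 0")
  case True
  then have "v$1 \<noteq> 0" using assms by (simp add: vec2_eq_iff)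
  then show ?thesis using True by (simp add: proj_def matrix_vector_mult_2)
next
  case False
  have "A$2$1 * (v$1 / v$2) + A$2$2 = (A *v v)$2 / v$2"
    and "A$1$1 * (v$1 / v$2) + A$1$2 = (A *v v)$1 / v$2"
    using False by (simp_all add: matrix_vector_mult_2 field_simps)
  then show ?thesis using False by (simp add: proj_def)
qed

lemma invertible_mult_nonzero:
  fixes A :: "real^2^2"
  assumes "invertible A" "v \<noteq> 0" shows "A *v v \<noteq> 0"
  using inj_matrix_vector_mult[OF assms(1)] assms(2) by (metis injD matrix_vector_mult_0_right)

text \<open>The library defines matrix_inv by choice; these are its defining properties.\<close>

lemma matrix_inv:
  assumes "invertible A"
  shows "A ** matrix_inv A = mat 1" "matrix_inv A ** A = mat 1" "invertible (matrix_inv A)"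
proof -
  have "A ** matrix_inv A = mat 1 \<and> matrix_inv A ** A = mat 1"
    using assms unfolding invertible_def matrix_inv_def by (rule someI_ex)
  then show "A ** matrix_inv A = mat 1" "matrix_inv A ** A = mat 1" "invertible (matrix_inv A)"
    unfolding invertible_def by auto
qed

lemma mob_mult: assumes "invertible B" shows "mob (A ** B) x = mob A (mob B x)"
proof -
  obtain v where "v \<noteq> 0" "x = proj v" using proj_surj by blast
  then show ?thesis
    using invertible_mult_nonzero[OF assms] by (simp add: mob_proj matrix_vector_mul_assoc)
qed

lemma mob_id: "mob (mat 1) = id"
  by (rule ext, metis id_apply matrix_vector_mul_lid mob_proj proj_surj)

lemma mob_scaleR: assumes "c \<noteq> 0" shows "mob (c *\<^sub>R A) = mob A"
proof
  fix x
  obtain v where "v \<noteq> 0" "x = proj v" using proj_surj by blast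
  then show "mob (c *\<^sub>R A) x = mob A x"
    using assms by (simp add: mob_proj proj_scaleR flip: scaleR_matrix_vector_assoc)
qed

lemma mob_matrix_inv:
  assumes "invertible A"
  shows "mob (matrix_inv A) \<circ> mob A = id" "mob A \<circ> mob (matrix_inv A) = id"
  using mob_mult[of A "matrix_inv A"] mob_mult[of "matrix_inv A" A] matrix_inv[OF assms]
  by (auto simp: assms mob_id)

text \<open>The coordinate swap (x, y) \<mapsto> (y, x). It relates the two standard charts, and it is
  also the intertwiner exchanging the two eigenlines in the sufficiency proof.\<close>

definition flip :: "real^2^2" where
  "flip = (\<chi> i j. if i = j then 0 else 1)"

lemma flip_involution: "flip ** flip = mat 1"
  by (simp add: flip_def matrix_matrix_mult_def mat_def vec_eq_iff forall_2 sum_2)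

text \<open>In homogeneous coordinates the chart i is "first over second coordinate" after applying
  chart_mat i (the identity for the chart at 0, the swap for the chart at infinity).\<close>

definition chart_mat :: "bool \<Rightarrow> real^2^2" where
  "chart_mat i = (if i then flip else mat 1)"

lemma chart_mat_involution: "chart_mat i ** chart_mat i = mat 1"
  by (simp add: chart_mat_def flip_involution)

lemma invertible_chart_mat: "invertible (chart_mat i)"
  using chart_mat_involution unfolding invertible_def by blast

lemma chart_inv_proj: "rp1_chart_inv i t = proj (chart_mat i *v vector [t, 1])"
  by (cases i) (simp_all add: chart_mat_def flip_def proj_def matrix_vector_mult_2)

lemma chart_proj: "rp1_chart i (proj v) = (chart_mat i *v v)$1 / (chart_mat i *v v)$2"
  by (cases i; cases "v$2 = 0") (simp_all add: chart_mat_def flip_def proj_def matrix_vector_mult_2)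

lemma cdom_proj:
  "v \<noteq> 0 \<Longrightarrow> proj v \<in> rp1_cdom i \<longleftrightarrow> (chart_mat i *v v)$2 \<noteq> 0"
  by (cases i) (auto simp: chart_mat_def flip_def proj_def matrix_vector_mult_2 vec2_eq_iff)

lemma chart_inv_chart: "x \<in> rp1_cdom i \<Longrightarrow> rp1_chart_inv i (rp1_chart i x) = x"
  by (cases i; cases x) auto

definition local_rep :: "bool \<Rightarrow> bool \<Rightarrow> (rp1 \<Rightarrow> rp1) \<Rightarrow> real \<Rightarrow> real" where
  "local_rep i j g t = rp1_chart j (g (rp1_chart_inv i t))"

lemma local_rep_comp:
  assumes "h (rp1_chart_inv i t) \<in> rp1_cdom k"
  shows "local_rep i j (g \<circ> h) t = local_rep k j g (local_rep i k h t)"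
  using assms by (simp add: local_rep_def chart_inv_chart)

definition lin_frac :: "real^2^2 \<Rightarrow> real \<Rightarrow> real" where
  "lin_frac M t = (M$1$1 * t + M$1$2) / (M$2$1 * t + M$2$2)"

definition lf_den :: "real^2^2 \<Rightarrow> real \<Rightarrow> real" where
  "lf_den M t = M$2$1 * t + M$2$2"

definition local_mat :: "bool \<Rightarrow> bool \<Rightarrow> real^2^2 \<Rightarrow> real^2^2" where
  "local_mat i j A = chart_mat j ** A ** chart_mat i"

lemma local_mat_vector:
  "local_mat i j A *v vector [t, 1] = chart_mat j *v (A *v (chart_mat i *v vector [t, 1]))"
  by (simp add: local_mat_def matrix_vector_mul_assoc matrix_mul_assoc)

lemma lin_frac_vector:
  "lin_frac M t = (M *v vector [t, 1])$1 / (M *v vector [t, 1])$2"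
  "lf_den M t = (M *v vector [t, 1])$2"
  by (simp_all add: lin_frac_def lf_den_def matrix_vector_mult_2)

lemma local_rep_mob: "local_rep i j (mob A) = lin_frac (local_mat i j A)"
proof
  fix t
  have "chart_mat i *v vector [t, 1] \<noteq> 0"
    using invertible_mult_nonzero[OF invertible_chart_mat] by (simp add: vec2_eq_iff)
  then show "local_rep i j (mob A) t = lin_frac (local_mat i j A) t"
    by (simp add: local_rep_def chart_inv_proj mob_proj chart_proj lin_frac_vector local_mat_vector)
qed

lemma local_rep_mob_cdom:
  assumes "invertible A"
  shows "mob A (rp1_chart_inv i t) \<in> rp1_cdom j \<longleftrightarrow> lf_den (local_mat i j A) t \<noteq> 0"
proof -
  have "chart_mat i *v vector [t, 1] \<noteq> 0"
    using invertible_mult_nonzero[OF invertible_chart_mat] by (simp add: vec2_eq_iff)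
  then show ?thesis
    using invertible_mult_nonzero[OF assms]
    by (simp add: chart_inv_proj mob_proj cdom_proj lin_frac_vector local_mat_vector)
qed

lemma det_chart_mat_square: "det (chart_mat i) * det (chart_mat i) = 1"
  using chart_mat_involution[of i] by (metis det_I det_mul)

lemma det_local_mat: "det (local_mat i i A) = det A"
  using det_chart_mat_square[of i] by (simp add: local_mat_def det_mul)

lemma invertible_local_mat: "invertible A \<Longrightarrow> invertible (local_mat i j A)"
  by (simp add: local_mat_def invertible_mult invertible_chart_mat)

subsection \<open>Moebius maps are diffeomorphisms\<close>

lemma lin_frac_deriv:
  assumes "lf_den M t \<noteq> 0"
  shows "(lin_frac M has_real_derivative det M / (lf_den M t)^2) (at t)"
proof -
  have "(lin_frac M has_real_derivative
      (M$1$1 * lf_den M t - (M$1$1 * t + M$1$2) * M$2$1) / (lf_den M t * lf_den M t)) (at t)"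
    using assms unfolding lin_frac_def lf_den_def by (auto intro!: derivative_eq_intros)
  then show ?thesis by (simp add: det_2 lf_den_def power2_eq_square algebra_simps)
qed

text \<open>Derivative of K / (c t + d)^n; iterating it gives all derivatives of a linear
  fractional function.\<close>

lemma inverse_power_deriv:
  fixes c d K :: real
  assumes "c * t + d \<noteq> 0"
  shows "((\<lambda>t. K / (c * t + d)^n) has_real_derivative
          - (real n * c * K) / (c * t + d)^(Suc n)) (at t)"
proof (cases n)
  case 0
  then show ?thesis by simp
next
  case (Suc m)
  define u where "u = c * t + d"
  have "((\<lambda>t. K / (c * t + d)^n) has_real_derivative
          - (K * (real n * u^(n - 1) * c)) / (u^n * u^n)) (at t)"
    using assms unfolding u_def by (auto intro!: derivative_eq_intros)
  moreover have "- (K * (real n * u^(n - 1) * c)) / (u^n * u^n) = - (real n * c * K) / u^(Suc n)"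
  proof -
    have "u \<noteq> 0" using assms by (simp add: u_def)
    then show ?thesis using Suc by (simp add: field_simps)
  qed
  ultimately show ?thesis by (simp add: u_def)
qed

lemma lin_frac_smooth: "smooth_on {t. lf_den M t \<noteq> 0} (lin_frac M)"
proof -
  define D :: "nat \<Rightarrow> real \<Rightarrow> real" where
    "D n = (case n of 0 \<Rightarrow> lin_frac M
              | Suc m \<Rightarrow> (\<lambda>t. (- M$2$1)^m * fact (Suc m) * det M / (lf_den M t)^(Suc (Suc m))))" for n
  have "(D n has_real_derivative D (Suc n) t) (at t)" if "lf_den M t \<noteq> 0" for n t
  proof (cases n)
    case 0
    then show ?thesis using lin_frac_deriv[OF that] by (simp add: D_def power2_eq_square)
  next
    case (Suc m)
    then show ?thesis
      using inverse_power_deriv[of "M$2$1" t "M$2$2" "(- M$2$1)^m * fact (Suc m) * det M" "Suc (Suc m)"] that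
      by (simp add: D_def lf_den_def algebra_simps)
  qed
  moreover have "D 0 = lin_frac M" by (simp add: D_def)
  ultimately show ?thesis unfolding smooth_on_def by blast
qed

lemma open_lf_den: "open {t. lf_den M t \<noteq> 0}"
  unfolding lf_den_def by (intro open_Collect_neq continuous_intros)

lemma mob_smooth: assumes "invertible A" shows "smooth_map (mob A)"
  unfolding smooth_map_def
proof
  fix p
  define i where "i = (p = Infty)"
  define j where "j = (mob A p = Infty)"
  define V where "V = {t. lf_den (local_mat i j A) t \<noteq> 0}"
  have pi: "p \<in> rp1_cdom i" by (cases p) (auto simp: i_def)
  have "mob A p \<in> rp1_cdom j" by (cases "mob A p") (auto simp: j_def)
  then have "rp1_chart i p \<in> V"
    using local_rep_mob_cdom[OF assms, of i "rp1_chart i p" j] chart_inv_chart[OF pi]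
    by (simp add: V_def)
  moreover have "\<forall>t\<in>V. mob A (rp1_chart_inv i t) \<in> rp1_cdom j"
    using local_rep_mob_cdom[OF assms] by (simp add: V_def)
  moreover have "smooth_on V (\<lambda>t. rp1_chart j (mob A (rp1_chart_inv i t)))"
    using lin_frac_smooth local_rep_mob[of i j A] by (simp add: V_def local_rep_def[abs_def])
  ultimately show "\<exists>i j V. open V \<and> p \<in> rp1_cdom i \<and> rp1_chart i p \<in> V \<and>
        (\<forall>t\<in>V. mob A (rp1_chart_inv i t) \<in> rp1_cdom j) \<and>
        smooth_on V (\<lambda>t. rp1_chart j (mob A (rp1_chart_inv i t)))"
    using pi open_lf_den unfolding V_def by blast
qed

lemma mob_diffeo: assumes "invertible A" shows "diffeo (mob A)"
proof -
  have "inv (mob A) = mob (matrix_inv A)"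
    by (rule inv_unique_comp) (use mob_matrix_inv[OF assms] in auto)
  then show ?thesis
    unfolding diffeo_def
    using o_bij mob_matrix_inv[OF assms] mob_smooth assms matrix_inv(3)[OF assms] by metis
qed

definition has_chart_deriv :: "(rp1 \<Rightarrow> rp1) \<Rightarrow> bool \<Rightarrow> bool \<Rightarrow> rp1 \<Rightarrow> real \<Rightarrow> bool" where
  "has_chart_deriv g i j p d \<longleftrightarrow>
     p \<in> rp1_cdom i \<and>
     eventually (\<lambda>t. g (rp1_chart_inv i t) \<in> rp1_cdom j) (nhds (rp1_chart i p)) \<and>
     (local_rep i j g has_real_derivative d) (at (rp1_chart i p))"

lemma has_chart_deriv_target:
  assumes "has_chart_deriv g i j p d" shows "g p \<in> rp1_cdom j"
proof -
  have "g (rp1_chart_inv i (rp1_chart i p)) \<in> rp1_cdom j"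
    using assms eventually_nhds_x_imp_x unfolding has_chart_deriv_def by blast
  then show ?thesis using assms chart_inv_chart by (simp add: has_chart_deriv_def)
qed

lemma has_chart_deriv_unique:
  "has_chart_deriv g i j p d \<Longrightarrow> has_chart_deriv g i j p d' \<Longrightarrow> d = d'"
  unfolding has_chart_deriv_def using DERIV_unique by blast

lemma smooth_map_has_chart_deriv:
  assumes "smooth_map g" obtains i j d where "has_chart_deriv g i j p d"
proof -
  obtain i j V where V: "open V" "p \<in> rp1_cdom i" "rp1_chart i p \<in> V"
      "\<forall>t\<in>V. g (rp1_chart_inv i t) \<in> rp1_cdom j"
    and "smooth_on V (local_rep i j g)"
    using assms unfolding smooth_map_def local_rep_def[abs_def] by blast
  then obtain D where D: "D 0 = local_rep i j g" "\<forall>n. \<forall>t\<in>V. (D n has_real_derivative D (Suc n) t) (at t)"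
    unfolding smooth_on_def by blast
  have "(D 0 has_real_derivative D 1 (rp1_chart i p)) (at (rp1_chart i p))"
    using D(2) V(3) by (metis One_nat_def)
  moreover have "eventually (\<lambda>t. g (rp1_chart_inv i t) \<in> rp1_cdom j) (nhds (rp1_chart i p))"
    using eventually_nhds_in_open[OF V(1,3)] by (rule eventually_mono) (use V(4) in blast)
  ultimately show ?thesis using that V(2) unfolding has_chart_deriv_def D(1) by blast
qed

lemma mob_has_chart_deriv:
  assumes "invertible A" "p \<in> rp1_cdom i" "mob A p \<in> rp1_cdom j"
  shows "has_chart_deriv (mob A) i j p
           (det (local_mat i j A) / (lf_den (local_mat i j A) (rp1_chart i p))^2)"
proof -
  have den: "lf_den (local_mat i j A) (rp1_chart i p) \<noteq> 0"
    using assms local_rep_mob_cdom[OF assms(1), of i "rp1_chart i p" j] chart_inv_chart by simp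
  have "eventually (\<lambda>t. lf_den (local_mat i j A) t \<noteq> 0) (nhds (rp1_chart i p))"
    using eventually_nhds_in_open[OF open_lf_den] den by simp
  then have "eventually (\<lambda>t. mob A (rp1_chart_inv i t) \<in> rp1_cdom j) (nhds (rp1_chart i p))"
    by (simp add: local_rep_mob_cdom[OF assms(1)])
  with assms(2) lin_frac_deriv[OF den] show ?thesis
    unfolding has_chart_deriv_def local_rep_mob by (intro conjI)
qed

lemma has_chart_deriv_comp:
  assumes h: "has_chart_deriv h i k p d1" and g: "has_chart_deriv g k j (h p) d2"
  shows "has_chart_deriv (g \<circ> h) i j p (d2 * d1)"
proof -
  define t0 where "t0 = rp1_chart i p"
  have p: "p \<in> rp1_cdom i" and hk: "eventually (\<lambda>t. h (rp1_chart_inv i t) \<in> rp1_cdom k) (nhds t0)"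
    and dh: "(local_rep i k h has_real_derivative d1) (at t0)"
    using h by (auto simp: has_chart_deriv_def t0_def)
  have s0: "local_rep i k h t0 = rp1_chart k (h p)"
    using p by (simp add: local_rep_def t0_def chart_inv_chart)
  have gj: "eventually (\<lambda>s. g (rp1_chart_inv k s) \<in> rp1_cdom j) (nhds (local_rep i k h t0))"
    and dg: "(local_rep k j g has_real_derivative d2) (at (local_rep i k h t0))"
    using g s0 by (auto simp: has_chart_deriv_def)
  have "filterlim (local_rep i k h) (nhds (local_rep i k h t0)) (nhds t0)"
    using DERIV_isCont[OF dh] by (simp add: isCont_def tendsto_at_iff_tendsto_nhds)
  then have "eventually (\<lambda>t. g (rp1_chart_inv k (local_rep i k h t)) \<in> rp1_cdom j) (nhds t0)"
    using eventually_compose_filterlim[OF gj] by blast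
  with hk have into: "eventually (\<lambda>t. (g \<circ> h) (rp1_chart_inv i t) \<in> rp1_cdom j) (nhds t0)"
    by eventually_elim (simp add: local_rep_def chart_inv_chart)
  have "eventually (\<lambda>t. local_rep k j g (local_rep i k h t) = local_rep i j (g \<circ> h) t) (nhds t0)"
    using hk by eventually_elim (simp add: local_rep_comp)
  from DERIV_cong_ev[OF refl this refl]
  have "(local_rep i j (g \<circ> h) has_real_derivative d2 * d1) (at t0)"
    using DERIV_chain2[OF dg dh] by simp
  then show ?thesis using p into by (simp add: has_chart_deriv_def t0_def)
qed

lemma chart_transition_deriv:
  assumes "p \<in> rp1_cdom i" "p \<in> rp1_cdom j"
  obtains c where "c \<noteq> 0" "has_chart_deriv id i j p c"
proof -
  have inv1: "invertible (mat 1 :: real^2^2)"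
    unfolding invertible_def by auto
  have den: "lf_den (local_mat i j (mat 1)) (rp1_chart i p) \<noteq> 0"
    using local_rep_mob_cdom[OF inv1, of i "rp1_chart i p" j] assms chart_inv_chart by (simp add: mob_id)
  have det: "det (local_mat i j (mat 1)) \<noteq> 0"
    using invertible_local_mat[OF inv1] invertible_det_nz by blast
  have "has_chart_deriv id i j p
      (det (local_mat i j (mat 1)) / (lf_den (local_mat i j (mat 1)) (rp1_chart i p))^2)"
    using mob_has_chart_deriv[OF inv1 assms(1)] assms(2) by (simp add: mob_id)
  with den det show ?thesis by (intro that) simp_all
qed

text \<open>A diffeomorphism has nonzero derivative in any charts: by the chain rule applied to
  inv f \<circ> f = id, the product of the derivatives (with a chart transition) is nonzero.\<close>

lemma diffeo_has_chart_deriv_nonzero: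
  assumes f: "diffeo f" and d: "has_chart_deriv f i j p d"
  shows "d \<noteq> 0"
proof -
  have "bij f" "smooth_map (inv f)" using f by (auto simp: diffeo_def)
  then obtain i' j' e where e: "has_chart_deriv (inv f) i' j' (f p) e"
    using smooth_map_has_chart_deriv by blast
  have p: "p \<in> rp1_cdom i" using d by (simp add: has_chart_deriv_def)
  have "f p \<in> rp1_cdom i'" using e by (simp add: has_chart_deriv_def)
  moreover have "f p \<in> rp1_cdom j" using has_chart_deriv_target[OF d] .
  ultimately obtain \<tau> where \<tau>: "has_chart_deriv id j i' (f p) \<tau>"
    using chart_transition_deriv by metis
  then have "has_chart_deriv f i i' p (\<tau> * d)"
    using has_chart_deriv_comp[OF d] by fastforce
  then have "has_chart_deriv (inv f \<circ> f) i j' p (e * (\<tau> * d))"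
    using has_chart_deriv_comp e by blast
  moreover have "inv f \<circ> f = id"
    using \<open>bij f\<close> by (simp add: bij_is_inj)
  moreover have "p \<in> rp1_cdom j'"
    using has_chart_deriv_target[OF e] \<open>bij f\<close> by (simp add: bij_is_inj)
  then obtain \<sigma> where "\<sigma> \<noteq> 0" "has_chart_deriv id i j' p \<sigma>"
    using chart_transition_deriv p by metis
  ultimately have "e * (\<tau> * d) \<noteq> 0"
    using has_chart_deriv_unique by metis
  then show ?thesis by simp
qed

subsection \<open>Multipliers of fixed points\<close>

lemma lf_den_ratio: "v$2 \<noteq> 0 \<Longrightarrow> lf_den M (v$1 / v$2) = (M *v v)$2 / v$2"
  by (simp add: lf_den_def matrix_vector_mult_2 field_simps)

lemma mob_eigenvector_fixed:
  assumes "invertible A" "A *v w = \<kappa> *\<^sub>R w" "w \<noteq> 0"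
  shows "\<kappa> \<noteq> 0" "mob A (proj w) = proj w"
proof -
  show "\<kappa> \<noteq> 0" using invertible_mult_nonzero[OF assms(1,3)] assms(2) by auto
  then show "mob A (proj w) = proj w" using assms by (simp add: mob_proj proj_scaleR)
qed

lemma mob_eigenvector_deriv:
  assumes A: "invertible A" and w: "A *v w = \<kappa> *\<^sub>R w" "w \<noteq> 0" and i: "proj w \<in> rp1_cdom i"
  shows "has_chart_deriv (mob A) i i (proj w) (det A / \<kappa>^2)"
proof -
  define v where "v = chart_mat i *v w"
  have v2: "v$2 \<noteq> 0" using cdom_proj[OF w(2)] i by (simp add: v_def)
  have "chart_mat i *v (chart_mat i *v w) = w"
    by (simp add: matrix_vector_mul_assoc chart_mat_involution)
  then have "local_mat i i A *v v = \<kappa> *\<^sub>R v"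
    by (simp add: v_def local_mat_def w(1) matrix_vector_mult_scaleR flip: matrix_vector_mul_assoc)
  then have "lf_den (local_mat i i A) (rp1_chart i (proj w)) = \<kappa>"
    using v2 by (simp add: chart_proj lf_den_ratio flip: v_def)
  then show ?thesis
    using mob_has_chart_deriv[OF A i, of i] mob_eigenvector_fixed[OF A w] i by (simp add: det_local_mat)
qed

text \<open>Key invariant: a smooth conjugacy f between mob P and mob Q maps fixed points to
  fixed points with the same multiplier, since f' * P' = Q' * f' and f' is nonzero.\<close>

lemma conjugacy_preserves_multiplier:
  assumes f: "diffeo f" and conj: "\<forall>x. f (mob P x) = mob Q (f x)"
    and P: "invertible P" "P *v w = \<kappa> *\<^sub>R w" "w \<noteq> 0"
    and Q: "invertible Q" "Q *v u = \<mu> *\<^sub>R u" "u \<noteq> 0"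
    and fw: "f (proj w) = proj u"
  shows "det P / \<kappa>^2 = det Q / \<mu>^2"
proof -
  have "smooth_map f" using f by (simp add: diffeo_def)
  then obtain i j d where d: "has_chart_deriv f i j (proj w) d"
    using smooth_map_has_chart_deriv by blast
  have dP: "has_chart_deriv (mob P) i i (proj w) (det P / \<kappa>^2)"
    using mob_eigenvector_deriv[OF P] d by (simp add: has_chart_deriv_def)
  have dQ: "has_chart_deriv (mob Q) j j (proj u) (det Q / \<mu>^2)"
    using mob_eigenvector_deriv[OF Q] has_chart_deriv_target[OF d] fw by simp
  have "has_chart_deriv (f \<circ> mob P) i j (proj w) (d * (det P / \<kappa>^2))"
    by (rule has_chart_deriv_comp[OF dP]) (use d mob_eigenvector_fixed(2)[OF P] in simp)
  moreover have "has_chart_deriv (mob Q \<circ> f) i j (proj w) (det Q / \<mu>^2 * d)"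
    by (rule has_chart_deriv_comp[OF d]) (use dQ fw in simp)
  moreover have "f \<circ> mob P = mob Q \<circ> f" using conj by auto
  ultimately have "d * (det P / \<kappa>^2) = d * (det Q / \<mu>^2)"
    using has_chart_deriv_unique by (metis mult.commute)
  then show ?thesis using diffeo_has_chart_deriv_nonzero[OF f d] mult_left_cancel by blast
qed

lemma diag2_mult_vector: "(diag2 a b *v z)$1 = a * z$1" "(diag2 a b *v z)$2 = b * z$2"
  by (simp_all add: diag2_def matrix_vector_mult_2)

lemma det_diag2: "det (diag2 a b) = a * b"
  by (simp add: diag2_def det_2)

lemma invertible_diag_conj:
  assumes "invertible S" "a \<noteq> 0" "b \<noteq> 0"
  shows "invertible (S ** diag2 a b ** matrix_inv S)"
  using assms matrix_inv(3)[OF assms(1)] invertible_det_nz[of "diag2 a b"]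
  by (simp add: det_diag2 invertible_mult)

lemma det_diag_conj:
  fixes S :: "real^2^2"
  assumes "invertible S" shows "det (S ** diag2 a b ** matrix_inv S) = a * b"
proof -
  have "det S * det (matrix_inv S) = 1"
    using matrix_inv(1)[OF assms] by (metis det_I det_mul)
  then show ?thesis by (simp add: det_mul det_diag2)
qed

lemma diag_conj_mult_vector:
  assumes "invertible S"
  shows "(S ** diag2 a b ** matrix_inv S) *v (S *v z) = S *v (diag2 a b *v z)"
proof -
  have "(S ** diag2 a b ** matrix_inv S) ** S = S ** diag2 a b"
    by (simp add: matrix_mul_assoc[symmetric] matrix_inv(2)[OF assms])
  then show ?thesis by (metis matrix_vector_mul_assoc)
qed

lemma diag_conj_second_column:
  assumes "invertible S"
  shows "(S ** diag2 a b ** matrix_inv S) *v (S *v vector [0, 1]) = b *\<^sub>R (S *v vector [0, 1])"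
proof -
  have "diag2 a b *v vector [0, 1] = b *\<^sub>R vector [0, 1]"
    by (simp add: vec2_eq_iff diag2_mult_vector)
  then show ?thesis by (simp add: diag_conj_mult_vector[OF assms] matrix_vector_mult_scaleR)
qed

text \<open>Every fixed point b of Q = T diag(q1, q2) T^-1 comes from an eigenvector; the eigenvalue
  is q2 if b is the image of the second column of T, and q1 otherwise (for q1 = q2 every point
  is fixed with eigenvalue q1 = q2).\<close>

lemma diag_conj_fixed_point:
  fixes T :: "real^2^2" and q1 q2 :: real and b :: rp1
  defines "Q \<equiv> T ** diag2 q1 q2 ** matrix_inv T" and "e2 \<equiv> T *v vector [0, 1]"
  assumes T: "invertible T" and q: "q1 \<noteq> 0" "q2 \<noteq> 0" and fixed: "mob Q b = b"
  obtains u where "u \<noteq> 0" "proj u = b" "Q *v u = (if b = proj e2 then q2 else q1) *\<^sub>R u"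
proof (cases "b = proj e2")
  case True
  have "e2 \<noteq> 0"
    using invertible_mult_nonzero[OF T] by (simp add: e2_def vec2_eq_iff)
  moreover have "Q *v e2 = q2 *\<^sub>R e2"
    unfolding Q_def e2_def by (rule diag_conj_second_column[OF T])
  ultimately show ?thesis using that True by simp
next
  case False
  obtain u where u: "u \<noteq> 0" "b = proj u" using proj_surj by blast
  define z where "z = matrix_inv T *v u"
  have uz: "u = T *v z"
    by (simp add: z_def matrix_vector_mul_assoc matrix_inv(1)[OF T])
  have "invertible Q" unfolding Q_def using invertible_diag_conj[OF T q] .
  then have "proj (Q *v u) = proj u" "Q *v u \<noteq> 0"
    using fixed u mob_proj invertible_mult_nonzero by auto
  then obtain c where "Q *v u = c *\<^sub>R u"
    using proj_eq_imp_parallel u(1) by blast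
  then have "T *v (diag2 q1 q2 *v z) = T *v (c *\<^sub>R z)"
    by (simp add: uz Q_def diag_conj_mult_vector[OF T] matrix_vector_mult_scaleR)
  then have Dz: "diag2 q1 q2 *v z = c *\<^sub>R z"
    using inj_matrix_vector_mult[OF T] by (simp add: inj_eq)
  have "z$1 \<noteq> 0"
  proof
    assume "z$1 = 0"
    then have "z = z$2 *\<^sub>R vector [0, 1]" by (simp add: vec2_eq_iff)
    then have "u = z$2 *\<^sub>R e2" unfolding uz e2_def by (metis matrix_vector_mult_scaleR)
    moreover have "z$2 \<noteq> 0" using u(1) \<open>u = z$2 *\<^sub>R e2\<close> by auto
    ultimately show False using False u(2) proj_scaleR by simp
  qed
  then have "c = q1" using Dz by (simp add: vec2_eq_iff diag2_mult_vector)
  then have "Q *v u = q1 *\<^sub>R u" using \<open>Q *v u = c *\<^sub>R u\<close> by simp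
  then show ?thesis using that u False by simp
qed

text \<open>Necessity for a single pair: the point [S e2] is fixed by P with multiplier p1/p2, so its
  image b is fixed by Q with the same multiplier, which is q1/q2 if b = [T e2] and q2/q1
  otherwise.\<close>

lemma conjugacy_ratio_single:
  fixes S T :: "real^2^2" and p1 p2 q1 q2 :: real and f :: "rp1 \<Rightarrow> rp1"
  defines "P \<equiv> S ** diag2 p1 p2 ** matrix_inv S" and "Q \<equiv> T ** diag2 q1 q2 ** matrix_inv T"
    and "b \<equiv> f (proj (S *v vector [0, 1]))"
  assumes S: "invertible S" and T: "invertible T"
    and p: "p1 \<noteq> 0" "p2 \<noteq> 0" and q: "q1 \<noteq> 0" "q2 \<noteq> 0"
    and f: "diffeo f" and conj: "\<forall>x. f (mob P x) = mob Q (f x)"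
  shows "q1 / q2 = (p1 / p2) powi (if b = proj (T *v vector [0, 1]) then 1 else -1)"
proof -
  define w where "w = S *v vector [0, 1]"
  define \<mu> where "\<mu> = (if b = proj (T *v vector [0, 1]) then q2 else q1)"
  have w: "w \<noteq> 0" using invertible_mult_nonzero[OF S] by (simp add: w_def vec2_eq_iff)
  have P: "invertible P" "P *v w = p2 *\<^sub>R w"
    unfolding P_def w_def using invertible_diag_conj[OF S p] diag_conj_second_column[OF S] by auto
  have Q: "invertible Q" unfolding Q_def using invertible_diag_conj[OF T q] .
  have "mob Q b = b" using conj mob_eigenvector_fixed(2)[OF P w] by (metis b_def w_def)
  then obtain u where u: "u \<noteq> 0" "proj u = b" and Qu: "Q *v u = \<mu> *\<^sub>R u"
    using diag_conj_fixed_point[OF T q] unfolding Q_def \<mu>_def by blast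
  from conjugacy_preserves_multiplier[OF f conj P w Q Qu u(1)]
  have "p1 * p2 / p2^2 = q1 * q2 / \<mu>^2"
    using u(2) det_diag_conj[OF S] det_diag_conj[OF T] by (simp add: P_def Q_def b_def w_def)
  then show ?thesis using p q by (auto simp: \<mu>_def power2_eq_square power_int_minus field_simps)
qed

text \<open>Necessity: the sign epsilon given by the previous lemma depends only on the image of the
  common fixed point [S e2], hence is uniform in r.\<close>

lemma conjugacy_forces_ratio_condition:
  fixes I :: "'i set" and S T :: "real^2^2" and p1 p2 q1 q2 :: "'i \<Rightarrow> real"
  assumes S: "invertible S" and T: "invertible T"
    and nz: "\<forall>r\<in>I. p1 r \<noteq> 0 \<and> p2 r \<noteq> 0 \<and> q1 r \<noteq> 0 \<and> q2 r \<noteq> 0"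
    and f: "diffeo f"
    and conj: "\<forall>r\<in>I. \<forall>x. f (mob (S ** diag2 (p1 r) (p2 r) ** matrix_inv S) x)
                        = mob (T ** diag2 (q1 r) (q2 r) ** matrix_inv T) (f x)"
  shows "\<exists>\<epsilon>::int \<in> {1, -1}. \<forall>r\<in>I. q1 r / q2 r = (p1 r / p2 r) powi \<epsilon>"
proof -
  define b where "b = f (proj (S *v vector [0, 1]))"
  have "\<forall>r\<in>I. q1 r / q2 r = (p1 r / p2 r) powi (if b = proj (T *v vector [0, 1]) then 1 else -1)"
    using conjugacy_ratio_single[OF S T _ _ _ _ f] nz conj unfolding b_def by blast
  then show ?thesis by (intro bexI[of _ "if b = proj (T *v vector [0, 1]) then 1 else -1"]) auto
qed

subsection \<open>Sufficiency of the ratio condition\<close>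

lemma mob_intertwine:
  assumes "invertible A" "invertible X" "c \<noteq> 0" "X ** A = c *\<^sub>R (B ** X)"
  shows "mob X (mob A x) = mob B (mob X x)"
  using assms by (simp add: mob_mult mob_scaleR flip: mob_mult)

lemma diag_conj_intertwine:
  fixes S T K D E :: "real^2^2"
  assumes S: "invertible S" and T: "invertible T" and KD: "K ** D = c *\<^sub>R (E ** K)"
  shows "(T ** K ** matrix_inv S) ** (S ** D ** matrix_inv S)
           = c *\<^sub>R ((T ** E ** matrix_inv T) ** (T ** K ** matrix_inv S))"
proof -
  have cancel: "matrix_inv A ** (A ** X) = X" if "invertible A" for A X :: "real^2^2"
    by (simp add: matrix_mul_assoc matrix_inv(2)[OF that])
  have KDY: "K ** (D ** Y) = c *\<^sub>R (E ** (K ** Y))" for Y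
    using KD by (simp add: matrix_mul_assoc scalar_matrix_assoc)
  show ?thesis
    by (simp add: matrix_mul_assoc[symmetric] cancel[OF S] cancel[OF T] KDY
        matrix_scalar_ac flip: scalar_matrix_assoc)
qed

lemma flip_diag2: "flip ** diag2 a b = diag2 b a ** flip"
  by (simp add: flip_def diag2_def matrix_matrix_mult_def vec_eq_iff forall_2 sum_2)

lemma diag2_scaleR: "diag2 (c * a) (c * b) = c *\<^sub>R diag2 a b"
  by (simp add: diag2_def vec_eq_iff forall_2)

lemma ratio_condition_intertwiner:
  fixes p1 p2 q1 q2 :: real
  assumes nz: "p1 \<noteq> 0" "p2 \<noteq> 0" "q1 \<noteq> 0" "q2 \<noteq> 0"
    and \<epsilon>: "\<epsilon> \<in> {1, -1}" and ratio: "q1 / q2 = (p1 / p2) powi \<epsilon>"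
  obtains c where "c \<noteq> 0"
    "(if \<epsilon> = 1 then mat 1 else flip) ** diag2 p1 p2
       = c *\<^sub>R (diag2 q1 q2 ** (if \<epsilon> = 1 then mat 1 else flip))"
proof (cases "\<epsilon> = 1")
  case True
  then have "diag2 p1 p2 = (p2 / q2) *\<^sub>R diag2 q1 q2"
    using ratio nz by (simp add: diag2_scaleR[symmetric] field_simps)
  then show ?thesis using True nz by (intro that[of "p2 / q2"]) simp_all
next
  case False
  then have "diag2 p2 p1 = (p1 / q2) *\<^sub>R diag2 q1 q2"
    using \<epsilon> ratio nz by (simp add: diag2_scaleR[symmetric] power_int_minus field_simps)
  then show ?thesis
    using False nz by (intro that[of "p1 / q2"]) (simp_all add: flip_diag2 scalar_matrix_assoc)
qed

lemma ratio_condition_gives_conjugacy: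
  fixes I :: "'i set" and S T :: "real^2^2" and p1 p2 q1 q2 :: "'i \<Rightarrow> real"
  assumes S: "invertible S" and T: "invertible T"
    and nz: "\<forall>r\<in>I. p1 r \<noteq> 0 \<and> p2 r \<noteq> 0 \<and> q1 r \<noteq> 0 \<and> q2 r \<noteq> 0"
    and \<epsilon>: "\<epsilon> \<in> {1, -1}" and ratio: "\<forall>r\<in>I. q1 r / q2 r = (p1 r / p2 r) powi \<epsilon>"
  shows "\<exists>f. diffeo f \<and>
            (\<forall>r\<in>I. \<forall>x. f (mob (S ** diag2 (p1 r) (p2 r) ** matrix_inv S) x)
                        = mob (T ** diag2 (q1 r) (q2 r) ** matrix_inv T) (f x))"
proof (intro exI conjI ballI allI)
  define K where "K = (if \<epsilon> = 1 then mat 1 else flip)"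
  define X where "X = T ** K ** matrix_inv S"
  have "invertible K"
    using flip_involution unfolding K_def invertible_def by auto
  then have X: "invertible X"
    unfolding X_def using S T matrix_inv(3) invertible_mult by blast
  then show "diffeo (mob X)" by (rule mob_diffeo)
  fix r x assume r: "r \<in> I"
  have p: "p1 r \<noteq> 0" "p2 r \<noteq> 0" and q: "q1 r \<noteq> 0" "q2 r \<noteq> 0" using nz r by auto
  obtain c where c: "c \<noteq> 0" "K ** diag2 (p1 r) (p2 r) = c *\<^sub>R (diag2 (q1 r) (q2 r) ** K)"
    using ratio_condition_intertwiner[OF p q \<epsilon>] ratio r unfolding K_def by blast
  show "mob X (mob (S ** diag2 (p1 r) (p2 r) ** matrix_inv S) x)
          = mob (T ** diag2 (q1 r) (q2 r) ** matrix_inv T) (mob X x)"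
    using mob_intertwine[OF invertible_diag_conj[OF S p] X c(1)]
      diag_conj_intertwine[OF S T c(2)] unfolding X_def by blast
qed

theorem theorem12p7:
  fixes I :: "'i set" and S T :: "real^2^2"
    and p1 p2 q1 q2 :: "'i \<Rightarrow> real"
  assumes "invertible S" and "invertible T"
    and "\<forall>r\<in>I. p1 r \<noteq> 0 \<and> p2 r \<noteq> 0 \<and> q1 r \<noteq> 0 \<and> q2 r \<noteq> 0"
  shows "(\<exists>f. diffeo f \<and>
            (\<forall>r\<in>I. \<forall>x. f (mob (S ** diag2 (p1 r) (p2 r) ** matrix_inv S) x)
                        = mob (T ** diag2 (q1 r) (q2 r) ** matrix_inv T) (f x)))
         \<longleftrightarrow> (\<exists>\<epsilon>::int \<in> {1, -1}. \<forall>r\<in>I. q1 r / q2 r = (p1 r / p2 r) powi \<epsilon>)"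
  using conjugacy_forces_ratio_condition[OF assms] ratio_condition_gives_conjugacy[OF assms]
  by blast

end
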